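(* Let $(X,G)$ be a minimal topological dynamical system. Then: (1) If $\pi_{eq}$ is open, then $\mathcal X_{eq}^{\mathrm{meas}}=\{\pi_{eq}^{-1}(y):y\in X_{eq}\}$. (2) If $\pi_{eq}$ is regular one to one, then $|E|=1$ for every $E\in\mathcal X_{eq}^{\mathrm{meas}}$. (3) If $\pi_{eq}$ is regular $K$ to one, then $|E|\le K$ for every $E\in\mathcal X_{eq}^{\mathrm{meas}}$.
   Context: $G$ is an infinite countable discrete group; a tds $(X,G)$ is a compact metric space with a $G$-action by homeomorphisms; minimal means no proper nonempty closed invariant subset. $\pi_{eq}:X\to X_{eq}$ is the factor map onto the maximal equicontinuous factor, $\nu_{eq}$ the unique invariant probability measure of $(X_{eq},G)$; $\pi_{eq}$ is regular $K$ to one if $\nu_{eq}(\{y:|\pi_{eq}^{-1}(y)|=K\})=1$. $2^X$ is the space of nonempty closed subsets with the Hausdorff metric $d_H$. $\mathcal X=\overline{\{\pi_{eq}^{-1}(y):y\in X_{eq}\}}\subset 2^X$; for $E\in\mathcal X$, $\pi_{\mathcal X}(E)$ is the single point $\pi_{eq}(E)$. $\mathcal X_{eq}^{\mathrm{meas}}=\{E\in\mathcal X:\nu_{eq}(\pi_{\mathcal X}(B^{\mathcal X}_\epsilon(E)))>0\ \forall\epsilon>0\}$, $B^{\mathcal X}_\epsilon(E)$ the open $d_H$-ball in $\mathcal X$. *)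

theory Defs
  imports "HOL-Probability.Probability"
begin

definition tds :: "('g::group_add \<Rightarrow> 'a::metric_space \<Rightarrow> 'a) \<Rightarrow> 'a set \<Rightarrow> bool" where
  "tds T X \<longleftrightarrow> compact X \<and> X \<noteq> {} \<and>
     (\<forall>g. continuous_on X (T g) \<and> T g ` X \<subseteq> X) \<and>
     (\<forall>x\<in>X. T 0 x = x) \<and>
     (\<forall>g h. \<forall>x\<in>X. T (g + h) x = T g (T h x))"

definition minimal_tds :: "('g::group_add \<Rightarrow> 'a::metric_space \<Rightarrow> 'a) \<Rightarrow> 'a set \<Rightarrow> bool" where
  "minimal_tds T X \<longleftrightarrow> tds T X \<and>
     (\<forall>A. A \<subseteq> X \<and> closed A \<and> A \<noteq> {} \<and> (\<forall>g. T g ` A \<subseteq> A) \<longrightarrow> A = X)"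

definition equicontinuous_tds :: "('g \<Rightarrow> 'a::metric_space \<Rightarrow> 'a) \<Rightarrow> 'a set \<Rightarrow> bool" where
  "equicontinuous_tds T X \<longleftrightarrow>
     (\<forall>e>0. \<exists>d>0. \<forall>x\<in>X. \<forall>y\<in>X. dist x y < d \<longrightarrow> (\<forall>g. dist (T g x) (T g y) < e))"

definition factor_map ::
  "('g \<Rightarrow> 'a \<Rightarrow> 'a) \<Rightarrow> ('a::metric_space) set \<Rightarrow> ('g \<Rightarrow> 'b \<Rightarrow> 'b) \<Rightarrow> ('b::metric_space) set
     \<Rightarrow> ('a \<Rightarrow> 'b) \<Rightarrow> bool" where
  "factor_map T X S Y p \<longleftrightarrow> continuous_on X p \<and> p ` X = Y \<and>
     (\<forall>g. \<forall>x\<in>X. p (T g x) = S g (p x))"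

text \<open>Test factors are taken with phase space inside the
metric space nat => real (product topology), into which every compact
metric space embeds (Hilbert cube), so this is the usual universal property.\<close>
definition max_equicontinuous_factor ::
  "('g::group_add \<Rightarrow> 'a \<Rightarrow> 'a) \<Rightarrow> ('a::metric_space) set \<Rightarrow> ('g \<Rightarrow> 'b \<Rightarrow> 'b) \<Rightarrow> ('b::metric_space) set
     \<Rightarrow> ('a \<Rightarrow> 'b) \<Rightarrow> bool" where
  "max_equicontinuous_factor T X S Y p \<longleftrightarrow>
     tds S Y \<and> equicontinuous_tds S Y \<and> factor_map T X S Y p \<and>
     (\<forall>(R :: 'g \<Rightarrow> (nat \<Rightarrow> real) \<Rightarrow> (nat \<Rightarrow> real)) Z q.
        tds R Z \<and> equicontinuous_tds R Z \<and> factor_map T X R Z q \<longrightarrow>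
        (\<exists>f. continuous_on Y f \<and> (\<forall>x\<in>X. q x = f (p x))))"

definition invariant_prob :: "('g \<Rightarrow> 'b \<Rightarrow> 'b) \<Rightarrow> ('b::metric_space) set \<Rightarrow> 'b measure \<Rightarrow> bool" where
  "invariant_prob S Y \<mu> \<longleftrightarrow> prob_space \<mu> \<and> sets \<mu> = sets (restrict_space borel Y) \<and>
     (\<forall>g. \<forall>A\<in>sets \<mu>. measure \<mu> (S g -` A \<inter> Y) = measure \<mu> A)"

definition fiber :: "('a \<Rightarrow> 'b) \<Rightarrow> 'a set \<Rightarrow> 'b \<Rightarrow> 'a set" where
  "fiber p X y = {x\<in>X. p x = y}"

definition hausdist :: "'a::metric_space set \<Rightarrow> 'a set \<Rightarrow> real" where
  "hausdist A B = max (SUP x\<in>A. infdist x B) (SUP y\<in>B. infdist y A)"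

text \<open>The closure, in the hyperspace of nonempty closed subsets of X with the
Hausdorff metric, of the set of fibres of p.\<close>
definition fiber_hull :: "('a::metric_space \<Rightarrow> 'b) \<Rightarrow> 'a set \<Rightarrow> 'b set \<Rightarrow> 'a set set" where
  "fiber_hull p X Y = {E. E \<subseteq> X \<and> closed E \<and> E \<noteq> {} \<and>
      (\<forall>e>0. \<exists>y\<in>Y. hausdist E (fiber p X y) < e)}"

definition piX :: "('a \<Rightarrow> 'b) \<Rightarrow> 'a set \<Rightarrow> 'b" where
  "piX p E = the_elem (p ` E)"

definition meas_part :: "('a::metric_space \<Rightarrow> 'b) \<Rightarrow> 'a set \<Rightarrow> 'b set \<Rightarrow> 'b measure \<Rightarrow> 'a set set" where
  "meas_part p X Y \<nu> = {E\<in>fiber_hull p X Y. \<forall>e>0.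
      measure \<nu> (piX p ` {F\<in>fiber_hull p X Y. hausdist E F < e}) > 0}"

end

theory Submission
  imports Defs
begin

(* The map y \<mapsto> fiber p X y is upper semicontinuous for the Hausdorff distance because p
   is a closed map, and lower semicontinuous when p is open; so for open p it is continuous.
   An element E of the hull is a Hausdorff limit of fibres over points y\<^sub>n, these converge
   to p x for any x \<in> E, and E lies in the fibre over that limit; for open p continuity makes
   E equal to it. The parameters of fibres Hausdorff-close to a given fibre then form a
   nonempty open set, which has positive measure because an invariant measure of a minimal
   system charges every nonempty open set.
   For the cardinality bounds: if E has more than K points, every F in the hull close enough
   to E has more than K points, and so has the fibre containing it; as E is in the measured
   part, these fibres lie over a set of positive measure, contradicting that almost every
   fibre has at most K points. *)

section \<open>Hausdorff distance\<close>

(* hausdist is built from suprema of reals, which are junk for unbounded or empty sets; it is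
   the Hausdorff distance only on bounded nonempty sets, hence the side conditions below. *)

lemma bdd_above_infdist_image:
  assumes "bounded A" "B \<noteq> {}"
  shows "bdd_above ((\<lambda>x. infdist x B) ` A)"
proof -
  obtain b where b: "b \<in> B" using assms(2) by blast
  obtain c r where cr: "\<forall>x\<in>A. dist c x \<le> r" using assms(1) unfolding bounded_def by blast
  have "infdist x B \<le> r + dist c b" if "x \<in> A" for x
  proof -
    have "infdist x B \<le> dist x b" using b by (rule infdist_le)
    also have "\<dots> \<le> dist x c + dist c b" by (rule dist_triangle)
    also have "\<dots> \<le> r + dist c b" using cr that by (metis add_right_mono dist_commute)
    finally show ?thesis .
  qed
  then show ?thesis by (rule bdd_aboveI2)
qed

lemma hausdist_commute: "hausdist A B = hausdist B A"
  unfolding hausdist_def by (rule max.commute)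

lemma infdist_le_hausdist:
  assumes "bounded A" "B \<noteq> {}" "x \<in> A"
  shows "infdist x B \<le> hausdist A B"
proof -
  have "infdist x B \<le> (SUP x\<in>A. infdist x B)"
    using assms by (intro cSUP_upper bdd_above_infdist_image)
  then show ?thesis unfolding hausdist_def by linarith
qed

lemma hausdist_nonneg:
  assumes "bounded A" "A \<noteq> {}" "B \<noteq> {}"
  shows "0 \<le> hausdist A B"
  using infdist_le_hausdist[OF assms(1,3)] infdist_nonneg assms(2) by (meson ex_in_conv order_trans)

lemma hausdist_le:
  assumes "A \<noteq> {}" "B \<noteq> {}" "\<forall>x\<in>A. infdist x B \<le> r" "\<forall>y\<in>B. infdist y A \<le> r"
  shows "hausdist A B \<le> r"
  unfolding hausdist_def using assms by (auto intro!: cSUP_least)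

lemma hausdist_refl: "A \<noteq> {} \<Longrightarrow> hausdist A A = 0"
  unfolding hausdist_def by simp

lemma hausdist_less_imp_dist_less:
  assumes "bounded A" "B \<noteq> {}" "x \<in> A" "hausdist A B < r"
  obtains y where "y \<in> B" "dist x y < r"
proof -
  have "infdist x B < r" using infdist_le_hausdist[OF assms(1-3)] assms(4) by linarith
  then show ?thesis using that assms(2) by (auto simp: infdist_notempty cINF_less_iff)
qed

lemma infdist_le_infdist_add_hausdist:
  assumes "bounded B" "B \<noteq> {}" "C \<noteq> {}"
  shows "infdist x C \<le> infdist x B + hausdist B C"
proof -
  have "infdist x C - hausdist B C \<le> dist x b" if "b \<in> B" for b
    using infdist_triangle[of x C b] infdist_le_hausdist[OF assms(1,3) that] by linarith
  then have "infdist x C - hausdist B C \<le> infdist x B"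
    unfolding infdist_notempty[OF assms(2)] using assms(2) by (intro cINF_greatest)
  then show ?thesis by simp
qed

lemma hausdist_triangle:
  assumes "bounded A" "bounded B" "bounded C" "A \<noteq> {}" "B \<noteq> {}" "C \<noteq> {}"
  shows "hausdist A C \<le> hausdist A B + hausdist B C"
proof (rule hausdist_le[OF assms(4,6)])
  show "\<forall>x\<in>A. infdist x C \<le> hausdist A B + hausdist B C"
    using infdist_le_infdist_add_hausdist[OF assms(2,5,6)] infdist_le_hausdist[OF assms(1,5)]
    by (smt (verit))
  show "\<forall>z\<in>C. infdist z A \<le> hausdist A B + hausdist B C"
    using infdist_le_infdist_add_hausdist[OF assms(2,5,4)] infdist_le_hausdist[OF assms(3,5)]
    by (smt (verit) hausdist_commute)
qed

lemma abs_hausdist_diff_le: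
  assumes "bounded A" "bounded B" "bounded C" "A \<noteq> {}" "B \<noteq> {}" "C \<noteq> {}"
  shows "\<bar>hausdist A B - hausdist A C\<bar> \<le> hausdist B C"
  using hausdist_triangle[of A B C] hausdist_triangle[of A C B] hausdist_commute[of B C] assms
  by (simp add: abs_le_iff)

lemma hausdist_eq_0_imp_eq:
  assumes "closed A" "closed B" "bounded A" "bounded B" "A \<noteq> {}" "B \<noteq> {}"
    and "hausdist A B = 0"
  shows "A = B"
proof -
  have "x \<in> B" if "x \<in> A" for x
    using infdist_le_hausdist[OF assms(3,6) that] infdist_nonneg[of x B] assms(2,6,7)
    by (simp add: in_closed_iff_infdist_zero)
  moreover have "x \<in> A" if "x \<in> B" for x
    using infdist_le_hausdist[OF assms(4,5) that] infdist_nonneg[of x A] assms(1,5,7)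
    by (simp add: in_closed_iff_infdist_zero hausdist_commute)
  ultimately show ?thesis by blast
qed

lemma finite_imp_separated:
  fixes D :: "'a::metric_space set"
  assumes "finite D"
  obtains e where "e > 0" "\<And>a b. a \<in> D \<Longrightarrow> b \<in> D \<Longrightarrow> a \<noteq> b \<Longrightarrow> e \<le> dist a b"
  using assms
proof (induction D arbitrary: thesis rule: finite_induct)
  case empty
  show ?case by (rule empty.prems[of 1]) auto
next
  case (insert x D)
  obtain e where e: "e > 0" "\<And>a b. a \<in> D \<Longrightarrow> b \<in> D \<Longrightarrow> a \<noteq> b \<Longrightarrow> e \<le> dist a b"
    using insert.IH by blast
  obtain d where d: "d > 0" "\<forall>b\<in>D. b \<noteq> x \<longrightarrow> d \<le> dist x b"
    using finite_set_avoid[OF insert.hyps(1)] by blast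
  show ?case
  proof (rule insert.prems[of "min e d"])
    fix a b assume "a \<in> insert x D" "b \<in> insert x D" "a \<noteq> b"
    then show "min e d \<le> dist a b"
      using e(2) d(2) by (auto simp: dist_commute min.coboundedI1 min.coboundedI2)
  qed (use e d in simp)
qed

lemma card_le_card_if_hausdist_less:
  fixes E :: "'a::metric_space set"
  assumes "bounded E" "finite D" "D \<subseteq> E"
  obtains \<epsilon> where "\<epsilon> > 0"
    "\<And>F. F \<noteq> {} \<Longrightarrow> hausdist E F < \<epsilon> \<Longrightarrow> finite F \<Longrightarrow> card D \<le> card F"
proof -
  obtain e where e: "e > 0" "\<And>a b. a \<in> D \<Longrightarrow> b \<in> D \<Longrightarrow> a \<noteq> b \<Longrightarrow> e \<le> dist a b"
    using finite_imp_separated[OF assms(2)] by blast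
  have "card D \<le> card F" if F: "F \<noteq> {}" "hausdist E F < e / 2" "finite F" for F
  proof -
    have "\<exists>y\<in>F. dist a y < e / 2" if "a \<in> D" for a
      using hausdist_less_imp_dist_less[OF assms(1) F(1) _ F(2)] that assms(3) by blast
    then obtain f where f: "\<And>a. a \<in> D \<Longrightarrow> f a \<in> F \<and> dist a (f a) < e / 2" by metis
    have "inj_on f D"
    proof (rule inj_onI, rule ccontr)
      fix a b assume ab: "a \<in> D" "b \<in> D" "f a = f b" "a \<noteq> b"
      have "dist a b \<le> dist a (f a) + dist b (f b)"
        using dist_triangle3[of a b "f a"] ab(3) by (simp add: dist_commute)
      also have "\<dots> < e" using f[OF ab(1)] f[OF ab(2)] by linarith
      finally show False using e(2)[OF ab(1,2,4)] by linarith
    qed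
    then show ?thesis using card_inj_on_le[of f D F] f F(3) by blast
  qed
  then show ?thesis using that e(1) half_gt_zero by blast
qed

section \<open>Minimal systems and invariant measures\<close>

lemma minimal_tds_factor:
  assumes "minimal_tds T X" "tds S Y" "factor_map T X S Y p"
  shows "minimal_tds S Y"
  unfolding minimal_tds_def
proof (intro conjI allI impI)
  fix A assume A: "A \<subseteq> Y \<and> closed A \<and> A \<noteq> {} \<and> (\<forall>g. S g ` A \<subseteq> A)"
  have cX: "compact X" and TX: "\<forall>g. T g ` X \<subseteq> X"
    and minX: "\<forall>B. B \<subseteq> X \<and> closed B \<and> B \<noteq> {} \<and> (\<forall>g. T g ` B \<subseteq> B) \<longrightarrow> B = X"
    using assms(1) unfolding minimal_tds_def tds_def by auto
  have cp: "continuous_on X p" and pY: "p ` X = Y" and eq: "\<forall>g. \<forall>x\<in>X. p (T g x) = S g (p x)"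
    using assms(3) unfolding factor_map_def by auto
  have "closed (X \<inter> p -` A)"
    using continuous_closed_preimage[OF cp compact_imp_closed[OF cX]] A by blast
  moreover have "X \<inter> p -` A \<noteq> {}" using A pY by blast
  moreover have "\<forall>g. T g ` (X \<inter> p -` A) \<subseteq> X \<inter> p -` A" using TX eq A by blast
  ultimately have "X \<inter> p -` A = X" using minX by blast
  then show "A = Y" using A pY by blast
qed (use assms(2) in blast)

lemma minimal_tds_translates_cover:
  fixes S :: "'g::group_add \<Rightarrow> 'b::metric_space \<Rightarrow> 'b"
  assumes "minimal_tds S Y" "open V" "Y \<inter> V \<noteq> {}"
  shows "Y \<subseteq> (\<Union>g. S g -` V)"
proof -
  have cY: "compact Y" and cS: "\<And>g. continuous_on Y (S g)" and SY: "\<And>g. S g ` Y \<subseteq> Y"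
    and S0: "\<forall>x\<in>Y. S 0 x = x" and Sadd: "\<And>g h. \<forall>x\<in>Y. S (g + h) x = S g (S h x)"
    and minY: "\<forall>A. A \<subseteq> Y \<and> closed A \<and> A \<noteq> {} \<and> (\<forall>g. S g ` A \<subseteq> A) \<longrightarrow> A = Y"
    using assms(1) unfolding minimal_tds_def tds_def by auto
  define C where "C = (\<Inter>g. Y \<inter> S g -` (- V))"
  have "closed (Y \<inter> S g -` (- V))" for g
    using continuous_closed_preimage[OF cS compact_imp_closed[OF cY] closed_Compl[OF assms(2)]] .
  then have "closed C" unfolding C_def by blast
  moreover have "S h ` C \<subseteq> C" for h
  proof
    fix x assume "x \<in> S h ` C"
    then obtain z where z: "z \<in> Y" "\<forall>g. S g z \<notin> V" "x = S h z" unfolding C_def by blast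
    then have "S g x \<notin> V" for g using z(2)[rule_format, of "g + h"] Sadd[of g h] by simp
    then show "x \<in> C" using z SY unfolding C_def by blast
  qed
  moreover have "C \<noteq> Y"
  proof
    obtain u where "u \<in> Y" "u \<in> V" using assms(3) by blast
    moreover assume "C = Y"
    ultimately show False using S0 unfolding C_def by blast
  qed
  moreover have "C \<subseteq> Y" unfolding C_def by blast
  ultimately have "C = {}" using minY by blast
  then show ?thesis unfolding C_def by blast
qed

lemma invariant_prob_open_pos:
  fixes S :: "'g::{group_add,countable} \<Rightarrow> 'b::metric_space \<Rightarrow> 'b"
  assumes "minimal_tds S Y" "invariant_prob S Y \<nu>" "open V" "Y \<inter> V \<noteq> {}"
  shows "measure \<nu> (Y \<inter> V) > 0"
proof (rule ccontr)
  assume "\<not> measure \<nu> (Y \<inter> V) > 0"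
  then have V0: "measure \<nu> (Y \<inter> V) = 0" using measure_nonneg[of \<nu>] by (meson not_less order_antisym)
  have ps: "prob_space \<nu>" and sets_\<nu>: "sets \<nu> = sets (restrict_space borel Y)"
    and inv: "\<And>g A. A \<in> sets \<nu> \<Longrightarrow> measure \<nu> (S g -` A \<inter> Y) = measure \<nu> A"
    using assms(2) unfolding invariant_prob_def by auto
  interpret prob_space \<nu> by (rule ps)
  have cS: "\<And>g. continuous_on Y (S g)" and SY: "\<And>g. S g ` Y \<subseteq> Y"
    using assms(1) unfolding minimal_tds_def tds_def by auto
  have open_sets: "Y \<inter> W \<in> sets \<nu>" if "open W" for W
    using that by (simp add: sets_\<nu> sets_restrict_space)
  have "Y \<inter> S g -` V \<in> null_sets \<nu>" for g
  proof -
    obtain W where W: "open W" "Y \<inter> S g -` V = Y \<inter> W"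
      using continuous_openin_preimage_gen[OF cS assms(3)] by (auto simp: openin_open)
    have eq: "S g -` (Y \<inter> V) \<inter> Y = Y \<inter> S g -` V" using SY by blast
    have "measure \<nu> (Y \<inter> S g -` V) = 0"
      using inv[OF open_sets[OF assms(3)], of g] V0 unfolding eq by linarith
    then show ?thesis using open_sets[OF W(1)] W(2) by (simp add: null_sets_def emeasure_eq_measure)
  qed
  then have "(\<Union>g. Y \<inter> S g -` V) \<in> null_sets \<nu>" by (intro null_sets_UN') auto
  moreover have "(\<Union>g. Y \<inter> S g -` V) = space \<nu>"
    using minimal_tds_translates_cover[OF assms(1,3,4)] sets_eq_imp_space_eq[OF sets_\<nu>]
    by (auto simp: space_restrict_space)
  ultimately show False using emeasure_space_1 by (metis null_setsD1 zero_neq_one)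
qed

lemma measure_pos_AE_obtains:
  assumes "measure M A > 0" "AE x in M. P x"
  obtains x where "x \<in> A" "P x"
proof (rule ccontr)
  assume "\<not> thesis"
  then have notP: "\<forall>x\<in>A. \<not> P x" using that by blast
  have A: "A \<in> sets M" using assms(1) measure_notin_sets by force
  obtain N where N: "{x \<in> space M. \<not> P x} \<subseteq> N" "emeasure M N = 0" "N \<in> sets M"
    using assms(2) by (rule AE_E)
  have "A \<subseteq> N" using N(1) notP sets.sets_into_space[OF A] by blast
  then have "emeasure M A = 0" using emeasure_mono[OF _ N(3)] N(2) by (metis le_zero_eq)
  then show False using assms(1) by (simp add: measure_def)
qed

section \<open>The hull of fibres\<close>

lemma fiber_subset: "fiber p X y \<subseteq> X"
  by (auto simp: fiber_def)

lemma fiber_eq_empty_iff [simp]: "fiber p X y = {} \<longleftrightarrow> y \<notin> p ` X"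
  by (auto simp: fiber_def)

lemma compact_fiber:
  fixes p :: "'a::metric_space \<Rightarrow> 'b::metric_space"
  assumes "compact X" "continuous_on X p"
  shows "compact (fiber p X y)"
proof -
  have "fiber p X y = X \<inter> p -` {y}" by (auto simp: fiber_def)
  moreover have "closed (X \<inter> p -` {y})"
    using continuous_closed_preimage[OF assms(2) compact_imp_closed[OF assms(1)]] by simp
  ultimately show ?thesis using compact_Int_closed[OF assms(1)] by (metis inf.absorb_iff2 inf_le1)
qed

lemma piX_fiber: "y \<in> p ` X \<Longrightarrow> piX p (fiber p X y) = y"
proof -
  assume "y \<in> p ` X"
  then have "p ` fiber p X y = {y}" by (auto simp: fiber_def)
  then show ?thesis by (simp add: piX_def)
qed

lemma fiber_in_fiber_hull:
  fixes p :: "'a::metric_space \<Rightarrow> 'b::metric_space"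
  assumes "compact X" "continuous_on X p" "p ` X = Y" "y \<in> Y"
  shows "fiber p X y \<in> fiber_hull p X Y"
proof -
  have ne: "fiber p X y \<noteq> {}" using assms(3,4) by simp
  then have "\<forall>e>0. \<exists>y'\<in>Y. hausdist (fiber p X y) (fiber p X y') < e"
    using assms(4) hausdist_refl[OF ne] by force
  then show ?thesis
    using fiber_subset compact_imp_closed[OF compact_fiber[OF assms(1,2)]] ne
    by (simp add: fiber_hull_def)
qed

lemma fiber_hull_approx_sequence:
  assumes "compact X" "p ` X = Y" "F \<in> fiber_hull p X Y"
  obtains ys where "\<And>n. ys n \<in> Y" "(\<lambda>n. hausdist F (fiber p X (ys n))) \<longlonglongrightarrow> 0"
proof -
  have F: "bounded F" "F \<noteq> {}"
    using assms(3) bounded_subset[OF compact_imp_bounded[OF assms(1)]]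
    unfolding fiber_hull_def by auto
  have "\<exists>y\<in>Y. hausdist F (fiber p X y) < inverse (real (Suc n))" for n
    using assms(3) unfolding fiber_hull_def by simp
  then obtain ys where ys: "\<And>n. ys n \<in> Y"
    "\<And>n. hausdist F (fiber p X (ys n)) < inverse (real (Suc n))"
    by metis
  have "\<And>n. 0 \<le> hausdist F (fiber p X (ys n))"
    using ys(1) assms(2) by (intro hausdist_nonneg[OF F]) auto
  then have "(\<lambda>n. hausdist F (fiber p X (ys n))) \<longlonglongrightarrow> 0"
    using ys(2) less_imp_le
    by (intro tendsto_sandwich[OF always_eventually always_eventually tendsto_const
          LIMSEQ_inverse_real_of_nat]) auto
  then show ?thesis using that ys(1) by blast
qed

lemma hausdist_fiber_tendsto_imp_tendsto:
  fixes p :: "'a::metric_space \<Rightarrow> 'b::metric_space"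
  assumes "continuous_on X p" "F \<subseteq> X" "bounded F" "x \<in> F" "\<And>n. ys n \<in> p ` X"
    and "(\<lambda>n. hausdist F (fiber p X (ys n))) \<longlonglongrightarrow> 0"
  shows "ys \<longlonglongrightarrow> p x"
proof (rule tendstoI)
  fix e :: real assume "e > 0"
  then obtain d where d: "d > 0" "\<And>x'. x' \<in> X \<Longrightarrow> dist x' x < d \<Longrightarrow> dist (p x') (p x) < e"
    using assms(1,2,4) unfolding continuous_on_iff by blast
  have "\<forall>\<^sub>F n in sequentially. hausdist F (fiber p X (ys n)) < d"
    using order_tendstoD(2)[OF assms(6) d(1)] .
  then show "\<forall>\<^sub>F n in sequentially. dist (ys n) (p x) < e"
  proof (rule eventually_mono)
    fix n assume "hausdist F (fiber p X (ys n)) < d"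
    moreover have "fiber p X (ys n) \<noteq> {}" using assms(5) by simp
    ultimately obtain z where "z \<in> fiber p X (ys n)" "dist x z < d"
      using hausdist_less_imp_dist_less[OF assms(3) _ assms(4)] by blast
    then show "dist (ys n) (p x) < e" using d(2)[of z] by (auto simp: fiber_def dist_commute)
  qed
qed

lemma fiber_hull_subset_fiber:
  fixes p :: "'a::metric_space \<Rightarrow> 'b::metric_space"
  assumes "compact X" "continuous_on X p" "p ` X = Y" "F \<in> fiber_hull p X Y" "x \<in> F"
  shows "F \<subseteq> fiber p X (p x)" "piX p F = p x"
proof -
  have F: "F \<subseteq> X" "bounded F"
    using assms(4) bounded_subset[OF compact_imp_bounded[OF assms(1)]]
    unfolding fiber_hull_def by auto
  obtain ys where ys: "\<And>n. ys n \<in> Y" "(\<lambda>n. hausdist F (fiber p X (ys n))) \<longlonglongrightarrow> 0"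
    using fiber_hull_approx_sequence[OF assms(1,3,4)] by blast
  have lim: "ys \<longlonglongrightarrow> p x'" if "x' \<in> F" for x'
    using ys(1) assms(3)
    by (intro hausdist_fiber_tendsto_imp_tendsto[OF assms(2) F that _ ys(2)]) auto
  have const: "p x' = p x" if "x' \<in> F" for x'
    using LIMSEQ_unique[OF lim[OF that] lim[OF assms(5)]] .
  then show "F \<subseteq> fiber p X (p x)" using F(1) by (auto simp: fiber_def)
  have "p ` F = {p x}" using const assms(5) by blast
  then show "piX p F = p x" by (simp add: piX_def)
qed

section \<open>Open factor maps\<close>

lemma fiber_upper_semicontinuous:
  fixes p :: "'a::metric_space \<Rightarrow> 'b::metric_space"
  assumes "compact X" "continuous_on X p" "d > 0"
  obtains V where "open V" "y \<in> V"
    "\<And>y' x. y' \<in> V \<Longrightarrow> x \<in> fiber p X y' \<Longrightarrow> infdist x (fiber p X y) < d"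
proof -
  define K where "K = X \<inter> {x. d \<le> infdist x (fiber p X y)}"
  have "closed {x. d \<le> infdist x (fiber p X y)}"
    by (intro closed_Collect_le continuous_on_const continuous_on_infdist continuous_on_id)
  with assms(1) have "compact K" unfolding K_def by (rule compact_Int_closed)
  then have "closed (p ` K)"
    using assms(2) unfolding K_def
    by (meson compact_continuous_image compact_imp_closed continuous_on_subset inf_le1)
  moreover have "y \<notin> p ` K"
    using assms(3) unfolding K_def by (auto simp: fiber_def)
  moreover have "infdist x (fiber p X y) < d" if "y' \<notin> p ` K" "x \<in> fiber p X y'" for x y'
    using that unfolding K_def fiber_def by force
  ultimately show ?thesis using that[of "- p ` K"] by blast
qed

lemma open_map_fiber_lower_semicontinuous:
  fixes p :: "'a::metric_space \<Rightarrow> 'b::metric_space"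
  assumes "compact X" "continuous_on X p" "open_map (top_of_set X) (top_of_set Y) p" "d > 0"
  obtains V where "open V" "y \<in> V"
    "\<And>y' x. y' \<in> V \<inter> Y \<Longrightarrow> x \<in> fiber p X y \<Longrightarrow> infdist x (fiber p X y') < d"
proof -
  have cover: "fiber p X y \<subseteq> (\<Union>c\<in>fiber p X y. ball c (d / 2))" using assms(4) by auto
  obtain C where C: "C \<subseteq> fiber p X y" "finite C" "fiber p X y \<subseteq> (\<Union>c\<in>C. ball c (d / 2))"
    by (rule compactE_image[OF compact_fiber[OF assms(1,2)] open_ball cover])
  have "\<exists>W. open W \<and> p ` (X \<inter> ball c (d / 2)) = Y \<inter> W" for c
  proof -
    have "openin (top_of_set X) (X \<inter> ball c (d / 2))" by (simp add: openin_open_Int)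
    then have "openin (top_of_set Y) (p ` (X \<inter> ball c (d / 2)))"
      using assms(3) unfolding open_map_def by blast
    then show ?thesis unfolding openin_open by blast
  qed
  then obtain W where W: "\<And>c. open (W c)" "\<And>c. p ` (X \<inter> ball c (d / 2)) = Y \<inter> W c"
    by metis
  have "y \<in> W c" if "c \<in> C" for c
    using that C(1) W(2)[of c] assms(4) by (force simp: fiber_def)
  moreover have "infdist x (fiber p X y') < d"
    if y': "y' \<in> (\<Inter>c\<in>C. W c) \<inter> Y" and x: "x \<in> fiber p X y" for x y'
  proof -
    obtain c where c: "c \<in> C" "dist c x < d / 2" using C(3) x by auto
    then have "y' \<in> p ` (X \<inter> ball c (d / 2))" using W(2) y' by blast
    then obtain z where z: "z \<in> fiber p X y'" "dist c z < d / 2" by (auto simp: fiber_def)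
    have "infdist x (fiber p X y') \<le> dist x z" using z(1) by (rule infdist_le)
    also have "\<dots> \<le> dist x c + dist c z" by (rule dist_triangle)
    also have "\<dots> < d" using c(2) z(2) by (simp add: dist_commute)
    finally show ?thesis .
  qed
  ultimately show ?thesis using that[of "\<Inter>c\<in>C. W c"] W(1) C(2) by blast
qed

lemma open_map_hausdist_fiber_tendsto:
  fixes p :: "'a::metric_space \<Rightarrow> 'b::metric_space"
  assumes "compact X" "continuous_on X p" "p ` X = Y" "open_map (top_of_set X) (top_of_set Y) p"
    and "y \<in> Y" "\<And>n. ys n \<in> Y" "ys \<longlonglongrightarrow> y"
  shows "(\<lambda>n. hausdist (fiber p X y) (fiber p X (ys n))) \<longlonglongrightarrow> 0"
proof (rule tendstoI)
  fix e :: real assume "e > 0"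
  then have e2: "e / 2 > 0" by simp
  obtain U where U: "open U" "y \<in> U"
    "\<And>y' x. y' \<in> U \<Longrightarrow> x \<in> fiber p X y' \<Longrightarrow> infdist x (fiber p X y) < e / 2"
    using fiber_upper_semicontinuous[OF assms(1,2) e2] by blast
  obtain L where L: "open L" "y \<in> L"
    "\<And>y' x. y' \<in> L \<inter> Y \<Longrightarrow> x \<in> fiber p X y \<Longrightarrow> infdist x (fiber p X y') < e / 2"
    using open_map_fiber_lower_semicontinuous[OF assms(1,2,4) e2] by blast
  have "\<forall>\<^sub>F n in sequentially. ys n \<in> U \<inter> L"
    using U(1,2) L(1,2) by (intro topological_tendstoD[OF assms(7)] open_Int) auto
  then show "\<forall>\<^sub>F n in sequentially. dist (hausdist (fiber p X y) (fiber p X (ys n))) 0 < e"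
  proof (rule eventually_mono)
    fix n assume n: "ys n \<in> U \<inter> L"
    have ne: "fiber p X y \<noteq> {}" "fiber p X (ys n) \<noteq> {}"
      using assms(3,5,6) by auto
    have "hausdist (fiber p X y) (fiber p X (ys n)) \<le> e / 2"
      using U(3) L(3) n assms(6) by (intro hausdist_le[OF ne]) (auto intro: less_imp_le)
    moreover have "0 \<le> hausdist (fiber p X y) (fiber p X (ys n))"
      using ne compact_imp_bounded[OF compact_fiber[OF assms(1,2)]] by (intro hausdist_nonneg)
    ultimately show "dist (hausdist (fiber p X y) (fiber p X (ys n))) 0 < e"
      using \<open>e > 0\<close> by simp
  qed
qed

lemma open_map_continuous_on_hausdist_fiber:
  fixes p :: "'a::metric_space \<Rightarrow> 'b::metric_space"
  assumes "compact X" "continuous_on X p" "p ` X = Y" "open_map (top_of_set X) (top_of_set Y) p"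
    and "bounded E" "E \<noteq> {}"
  shows "continuous_on Y (\<lambda>y. hausdist E (fiber p X y))"
proof (rule continuous_on_sequentiallyI)
  fix ys y assume ys: "\<forall>n. ys n \<in> Y" and y: "y \<in> Y" and lim: "ys \<longlonglongrightarrow> y"
  have bounded_fiber: "bounded (fiber p X y')" for y'
    using compact_imp_bounded[OF compact_fiber[OF assms(1,2)]] .
  have ne: "fiber p X y' \<noteq> {}" if "y' \<in> Y" for y'
    using that assms(3) by auto
  have "(\<lambda>n. hausdist E (fiber p X (ys n)) - hausdist E (fiber p X y)) \<longlonglongrightarrow> 0"
  proof (rule Lim_null_comparison)
    have "norm (hausdist E (fiber p X (ys n)) - hausdist E (fiber p X y))
        \<le> hausdist (fiber p X y) (fiber p X (ys n))" for n
      using abs_hausdist_diff_le[OF assms(5) bounded_fiber bounded_fiber assms(6)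
          ne[OF ys[rule_format]] ne[OF y]]
      by (simp add: hausdist_commute)
    then show "\<forall>\<^sub>F n in sequentially.
        norm (hausdist E (fiber p X (ys n)) - hausdist E (fiber p X y))
          \<le> hausdist (fiber p X y) (fiber p X (ys n))"
      by simp
    show "(\<lambda>n. hausdist (fiber p X y) (fiber p X (ys n))) \<longlonglongrightarrow> 0"
      using ys by (intro open_map_hausdist_fiber_tendsto[OF assms(1-4) y _ lim]) auto
  qed
  then show "(\<lambda>n. hausdist E (fiber p X (ys n))) \<longlonglongrightarrow> hausdist E (fiber p X y)"
    by (rule LIM_zero_cancel)
qed

lemma open_map_fiber_hull_eq:
  fixes p :: "'a::metric_space \<Rightarrow> 'b::metric_space"
  assumes "compact X" "continuous_on X p" "p ` X = Y" "open_map (top_of_set X) (top_of_set Y) p"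
  shows "fiber_hull p X Y = fiber p X ` Y"
proof
  show "fiber p X ` Y \<subseteq> fiber_hull p X Y" using fiber_in_fiber_hull[OF assms(1-3)] by blast
  show "fiber_hull p X Y \<subseteq> fiber p X ` Y"
  proof
    fix F assume F: "F \<in> fiber_hull p X Y"
    then have FX: "F \<subseteq> X" "closed F" "F \<noteq> {}" by (auto simp: fiber_hull_def)
    then obtain x where x: "x \<in> F" by blast
    have bF: "bounded F" using bounded_subset[OF compact_imp_bounded[OF assms(1)] FX(1)] .
    have px: "p x \<in> Y" using x FX(1) assms(3) by blast
    obtain ys where ys: "\<And>n. ys n \<in> Y" "(\<lambda>n. hausdist F (fiber p X (ys n))) \<longlonglongrightarrow> 0"
      using fiber_hull_approx_sequence[OF assms(1,3) F] by blast
    have "ys \<longlonglongrightarrow> p x"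
      using ys(1) assms(3)
      by (intro hausdist_fiber_tendsto_imp_tendsto[OF assms(2) FX(1) bF x _ ys(2)]) auto
    then have "(\<lambda>n. hausdist F (fiber p X (ys n))) \<longlonglongrightarrow> hausdist F (fiber p X (p x))"
      using px ys(1)
      by (intro continuous_on_tendsto_compose[OF
            open_map_continuous_on_hausdist_fiber[OF assms bF FX(3)]]) auto
    then have "hausdist F (fiber p X (p x)) = 0" using ys(2) LIMSEQ_unique by blast
    then have "F = fiber p X (p x)"
      using FX(2,3) bF px assms(3) compact_fiber[OF assms(1,2)]
      by (intro hausdist_eq_0_imp_eq) (auto intro: compact_imp_closed compact_imp_bounded)
    then show "F \<in> fiber p X ` Y" using px by blast
  qed
qed

section \<open>The measured part of the hull\<close>

lemma open_map_meas_part_eq: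
  fixes S :: "'g::{group_add,countable} \<Rightarrow> 'b::metric_space \<Rightarrow> 'b"
    and p :: "'a::metric_space \<Rightarrow> 'b"
  assumes "compact X" "continuous_on X p" "p ` X = Y" "open_map (top_of_set X) (top_of_set Y) p"
    and "minimal_tds S Y" "invariant_prob S Y \<nu>"
  shows "meas_part p X Y \<nu> = fiber p X ` Y"
proof
  have hull: "fiber_hull p X Y = fiber p X ` Y" by (rule open_map_fiber_hull_eq[OF assms(1-4)])
  then show "meas_part p X Y \<nu> \<subseteq> fiber p X ` Y" unfolding meas_part_def by blast
  show "fiber p X ` Y \<subseteq> meas_part p X Y \<nu>"
  proof
    fix E assume "E \<in> fiber p X ` Y"
    then obtain y where y: "y \<in> Y" and E: "E = fiber p X y" by blast
    have bE: "bounded E" and neE: "E \<noteq> {}"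
      using E y assms(3) compact_imp_bounded[OF compact_fiber[OF assms(1,2)]] by auto
    define h where "h y' = hausdist E (fiber p X y')" for y'
    have "measure \<nu> (piX p ` {F \<in> fiber_hull p X Y. hausdist E F < e}) > 0" if "e > 0" for e
    proof -
      have "piX p ` {F \<in> fiber_hull p X Y. hausdist E F < e}
          = piX p ` fiber p X ` (Y \<inter> h -` {..<e})"
        unfolding hull h_def by auto
      also have "\<dots> = Y \<inter> h -` {..<e}"
        using assms(3) by (force simp: image_image piX_fiber)
      finally have eq: "piX p ` {F \<in> fiber_hull p X Y. hausdist E F < e} = Y \<inter> h -` {..<e}" .
      obtain W where W: "open W" "Y \<inter> h -` {..<e} = Y \<inter> W"
        using continuous_openin_preimage_gen[OF
            open_map_continuous_on_hausdist_fiber[OF assms(1-4) bE neE] open_lessThan]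
        unfolding openin_open h_def by blast
      have "y \<in> Y \<inter> h -` {..<e}" using y hausdist_refl[OF neE] that unfolding E h_def by simp
      then show ?thesis
        unfolding eq W(2) using invariant_prob_open_pos[OF assms(5,6) W(1)] by blast
    qed
    then show "E \<in> meas_part p X Y \<nu>"
      using fiber_in_fiber_hull[OF assms(1-3) y] unfolding meas_part_def E by blast
  qed
qed

lemma meas_part_card_le:
  fixes p :: "'a::metric_space \<Rightarrow> 'b::metric_space"
  assumes "compact X" "continuous_on X p" "p ` X = Y"
    and "AE y in \<nu>. finite (fiber p X y) \<and> card (fiber p X y) \<le> K"
    and "E \<in> meas_part p X Y \<nu>"
  shows "finite E \<and> card E \<le> K"
proof (rule ccontr)
  assume "\<not> (finite E \<and> card E \<le> K)"
  then obtain D where D: "D \<subseteq> E" "finite D" "card D = Suc K"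
    by (metis infinite_arbitrarily_large not_less_eq_eq obtain_subset_with_card_n)
  have E: "E \<in> fiber_hull p X Y" using assms(5) unfolding meas_part_def by blast
  then have "bounded E"
    using bounded_subset[OF compact_imp_bounded[OF assms(1)]] unfolding fiber_hull_def by blast
  then obtain \<epsilon> where \<epsilon>: "\<epsilon> > 0"
    "\<And>F. F \<noteq> {} \<Longrightarrow> hausdist E F < \<epsilon> \<Longrightarrow> finite F \<Longrightarrow> card D \<le> card F"
    using card_le_card_if_hausdist_less D(1,2) by metis
  have "measure \<nu> (piX p ` {F \<in> fiber_hull p X Y. hausdist E F < \<epsilon>}) > 0"
    using assms(5) \<epsilon>(1) unfolding meas_part_def by blast
  then obtain y where "y \<in> piX p ` {F \<in> fiber_hull p X Y. hausdist E F < \<epsilon>}"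
    and fin: "finite (fiber p X y)" "card (fiber p X y) \<le> K"
    using measure_pos_AE_obtains assms(4) by (metis (lifting))
  then obtain F x where F: "F \<in> fiber_hull p X Y" "hausdist E F < \<epsilon>" "y = piX p F" and x: "x \<in> F"
    unfolding fiber_hull_def by blast
  have sub: "F \<subseteq> fiber p X y"
    using fiber_hull_subset_fiber[OF assms(1-3) F(1) x] F(3) by simp
  then have "finite F" using fin(1) by (rule finite_subset)
  then have "card D \<le> card F" using \<epsilon>(2) F(2) x by blast
  also have "\<dots> \<le> K" using card_mono[OF fin(1) sub] fin(2) by linarith
  finally show False using D(3) by simp
qed

theorem lemma3p3:
  fixes T :: "'g::{group_add,countable} \<Rightarrow> 'a::metric_space \<Rightarrow> 'a"
    and X :: "'a set"
    and S :: "'g \<Rightarrow> 'b::metric_space \<Rightarrow> 'b"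
    and Y :: "'b set"
    and p :: "'a \<Rightarrow> 'b"
    and \<nu> :: "'b measure"
  assumes "infinite (UNIV :: 'g set)"
    and "minimal_tds T X"
    and "max_equicontinuous_factor T X S Y p"
    and "invariant_prob S Y \<nu>"
    and "\<forall>\<mu>. invariant_prob S Y \<mu> \<longrightarrow> \<mu> = \<nu>"
  shows "(open_map (top_of_set X) (top_of_set Y) p \<longrightarrow>
            meas_part p X Y \<nu> = {fiber p X y | y. y \<in> Y})
       \<and> ((AE y in \<nu>. finite (fiber p X y) \<and> card (fiber p X y) = 1) \<longrightarrow>
            (\<forall>E\<in>meas_part p X Y \<nu>. card E = 1))
       \<and> (\<forall>K::nat. (AE y in \<nu>. finite (fiber p X y) \<and> card (fiber p X y) = K) \<longrightarrow>
            (\<forall>E\<in>meas_part p X Y \<nu>. finite E \<and> card E \<le> K))"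
proof -
  have cX: "compact X" using assms(2) unfolding minimal_tds_def tds_def by blast
  have tY: "tds S Y" and fm: "factor_map T X S Y p"
    using assms(3) unfolding max_equicontinuous_factor_def by blast+
  have cp: "continuous_on X p" and pY: "p ` X = Y" using fm unfolding factor_map_def by blast+
  have mY: "minimal_tds S Y" by (rule minimal_tds_factor[OF assms(2) tY fm])
  have card_le: "finite E \<and> card E \<le> K"
    if "AE y in \<nu>. finite (fiber p X y) \<and> card (fiber p X y) = K" "E \<in> meas_part p X Y \<nu>" for E K
    using that by (intro meas_part_card_le[OF cX cp pY]) (auto elim: eventually_mono)
  have card_1: "card E = 1"
    if "AE y in \<nu>. finite (fiber p X y) \<and> card (fiber p X y) = 1" "E \<in> meas_part p X Y \<nu>" for E
  proof -
    have "finite E" "card E \<le> 1" using card_le[OF that] by auto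
    moreover have "E \<noteq> {}" using that(2) unfolding meas_part_def fiber_hull_def by blast
    ultimately show ?thesis by (simp add: le_Suc_eq)
  qed
  have "open_map (top_of_set X) (top_of_set Y) p \<longrightarrow> meas_part p X Y \<nu> = {fiber p X y | y. y \<in> Y}"
    using open_map_meas_part_eq[OF cX cp pY _ mY assms(4)] by (simp add: Setcompr_eq_image)
  then show ?thesis using card_le card_1 by blast
qed

end
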